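(* Let $\mathcal F$ be an admissible sheaf of local vector fields on a smooth manifold $M$, and let $\gamma:[a,b]\to M$ be a continuous path such that $t\mapsto\kappa^{\mathcal F}_{\gamma(t)}$ is constant on $[a,b]$. Then for every $\mathfrak g_*\in\mathfrak G^{\mathcal F}_{\gamma(a)}$ there exists a unique transport of $\mathcal F$-germs $t\mapsto\mathfrak g_t$ along $\gamma$ with $\mathfrak g_a=\mathfrak g_*$.
   Context: Let $M$ be a smooth manifold and $\mathfrak X(U)$ the smooth vector fields on an open set $U$. A sheaf of local vector fields $\mathcal F$ on $M$ assigns to every connected open set $U\subset M$ a linear subspace $\mathcal F(U)\subset\mathfrak X(U)$, stable under restriction to connected open subsets and satisfying gluing: if $K\in\mathfrak X(U)$ and $U=\bigcup_i U_i$ with $K|_{U_i}\in\mathcal F(U_i)$, then $K\in\mathcal F(U)$. $\mathcal F$ has the unique continuation property if whenever $U$ is connected open, $K\in\mathcal F(U)$ and $K$ vanishes on a nonempty open subset of $U$, then $K=0$. $\mathcal F$ has bounded rank if there is an integer $N$ with $\dim\mathcal F(U)\le N$ for all connected open $U$; it is admissible if it has the unique continuation property and bounded rank. For $p\in M$, $\mathfrak G^{\mathcal F}_p$ is the vector space of germs at $p$ of elements $K\in\mathcal F(U)$ ($U$ a connected open neighborhood of $p$), two such being identified if they agree on an open neighborhood of $p$; the germ of $K$ is $\mathrm{germ}_p(K)$, and $\kappa^{\mathcal F}_p:=\dim\mathfrak G^{\mathcal F}_p$. Given a curve $\gamma:[a,b]\to M$, a transport of $\mathcal F$-germs along $\gamma$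 is a map $t\mapsto\mathfrak g_t\in\mathfrak G^{\mathcal F}_{\gamma(t)}$ such that for every $t_*\in[a,b]$ there exist $\varepsilon>0$, an open neighborhood $W$ of $\gamma(t_* )$ and $K\in\mathcal F(W)$ with $\gamma(t)\in W$ and $\mathfrak g_t=\mathrm{germ}_{\gamma(t)}(K)$ for all $t\in(t_*-\varepsilon,t_*+\varepsilon)\cap[a,b]$. *)

theory Defs
  imports "HOL-Analysis.Analysis"
begin

fun iter_deriv :: "('e::euclidean_space \<Rightarrow> real) \<Rightarrow> 'e list \<Rightarrow> 'e \<Rightarrow> real" where
  "iter_deriv f [] = f"
| "iter_deriv f (v # vs) = (\<lambda>x. frechet_derivative (iter_deriv f vs) (at x) v)"

definition smooth_fun_on :: "'e::euclidean_space set \<Rightarrow> ('e \<Rightarrow> real) \<Rightarrow> bool" where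
  "smooth_fun_on S f \<longleftrightarrow> (\<forall>vs. set vs \<subseteq> Basis \<longrightarrow> iter_deriv f vs differentiable_on S)"

definition smooth_map_on :: "'e::euclidean_space set \<Rightarrow> ('e \<Rightarrow> 'f::euclidean_space) \<Rightarrow> bool" where
  "smooth_map_on S f \<longleftrightarrow> (\<forall>i\<in>Basis. smooth_fun_on S (\<lambda>x. f x \<bullet> i))"

type_synonym ('a, 'e) chart = "('a \<Rightarrow> 'e) \<times> 'a set"

definition is_chart :: "('a::topological_space, 'e::euclidean_space) chart \<Rightarrow> bool" where
  "is_chart c \<longleftrightarrow> (case c of (\<phi>, V) \<Rightarrow>
     open V \<and> open (\<phi> ` V) \<and> inj_on \<phi> V \<and> continuous_on V \<phi> \<and>
     continuous_on (\<phi> ` V) (inv_into V \<phi>))"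

text \<open>A smooth atlas on the whole space (the type \<open>'a\<close> is the manifold M, of dimension DIM('e)).\<close>
definition smooth_atlas :: "('a::topological_space, 'e::euclidean_space) chart set \<Rightarrow> bool" where
  "smooth_atlas A \<longleftrightarrow>
     (\<Union>(snd ` A) = UNIV) \<and> (\<forall>c\<in>A. is_chart c) \<and>
     (\<forall>c\<in>A. \<forall>d\<in>A. smooth_map_on (fst c ` (snd c \<inter> snd d)) (fst d \<circ> inv_into (snd c) (fst c)))"

definition smooth_manifold :: "('a::topological_space, 'e::euclidean_space) chart set \<Rightarrow> bool" where
  "smooth_manifold A \<longleftrightarrow> smooth_atlas A \<and>
     (\<forall>x y::'a. x \<noteq> y \<longrightarrow> (\<exists>U V. open U \<and> open V \<and> x \<in> U \<and> y \<in> V \<and> U \<inter> V = {})) \<and>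
     (\<exists>\<B>::'a set set. countable \<B> \<and> topological_basis \<B>)"

text \<open>A (possibly local) vector field is represented by its coordinate expressions:
  \<open>X p c\<close> is the coordinate vector of X at p in chart c.  It is normalised to 0
  outside its domain U and for charts not containing p.\<close>
type_synonym ('a, 'e) vfield = "'a \<Rightarrow> ('a, 'e) chart \<Rightarrow> 'e"

definition vector_field_on :: "('a::topological_space, 'e::euclidean_space) chart set \<Rightarrow> 'a set \<Rightarrow> ('a, 'e) vfield \<Rightarrow> bool" where
  "vector_field_on A U X \<longleftrightarrow>
     (\<forall>p c. (p \<notin> U \<or> c \<notin> A \<or> p \<notin> snd c) \<longrightarrow> X p c = 0) \<and>
     (\<forall>c\<in>A. smooth_map_on (fst c ` (U \<inter> snd c)) (\<lambda>y. X (inv_into (snd c) (fst c) y) c)) \<and>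
     (\<forall>c\<in>A. \<forall>d\<in>A. \<forall>p\<in>U \<inter> snd c \<inter> snd d.
        X p d = frechet_derivative (fst d \<circ> inv_into (snd c) (fst c)) (at (fst c p)) (X p c))"

definition vfields :: "('a::topological_space, 'e::euclidean_space) chart set \<Rightarrow> 'a set \<Rightarrow> ('a, 'e) vfield set" where
  "vfields A U = {X. vector_field_on A U X}"

definition vf_zero :: "('a, 'e::real_vector) vfield" where
  "vf_zero = (\<lambda>p c. 0)"

definition vf_restrict :: "'a set \<Rightarrow> ('a, 'e::real_vector) vfield \<Rightarrow> ('a, 'e) vfield" where
  "vf_restrict V X = (\<lambda>p c. if p \<in> V then X p c else 0)"

definition lin_subspace :: "('a, 'e::real_vector) vfield set \<Rightarrow> bool" where
  "lin_subspace S \<longleftrightarrow> vf_zero \<in> S \<and>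
     (\<forall>X\<in>S. \<forall>Y\<in>S. (\<lambda>p c. X p c + Y p c) \<in> S) \<and>
     (\<forall>r. \<forall>X\<in>S. (\<lambda>p c. r *\<^sub>R X p c) \<in> S)"

definition lin_indep :: "('a, 'e::real_vector) vfield set \<Rightarrow> bool" where
  "lin_indep B \<longleftrightarrow> (\<forall>B' c. finite B' \<and> B' \<subseteq> B \<and>
      (\<lambda>p d. \<Sum>K\<in>B'. c K *\<^sub>R K p d) = vf_zero \<longrightarrow> (\<forall>K\<in>B'. c K = 0))"

definition conn_open :: "'a::topological_space set \<Rightarrow> bool" where
  "conn_open U \<longleftrightarrow> open U \<and> connected U"

definition vf_sheaf :: "('a::topological_space, 'e::euclidean_space) chart set \<Rightarrow> ('a set \<Rightarrow> ('a, 'e) vfield set) \<Rightarrow> bool" where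
  "vf_sheaf A \<F> \<longleftrightarrow>
     (\<forall>U. conn_open U \<longrightarrow> \<F> U \<subseteq> vfields A U \<and> lin_subspace (\<F> U)) \<and>
     (\<forall>U V K. conn_open U \<and> conn_open V \<and> V \<subseteq> U \<and> K \<in> \<F> U \<longrightarrow> vf_restrict V K \<in> \<F> V) \<and>
     (\<forall>U \<U> K. conn_open U \<and> (\<forall>W\<in>\<U>. conn_open W) \<and> \<Union>\<U> = U \<and> K \<in> vfields A U \<and>
        (\<forall>W\<in>\<U>. vf_restrict W K \<in> \<F> W) \<longrightarrow> K \<in> \<F> U)"

definition unique_continuation :: "('a::topological_space set \<Rightarrow> ('a, 'e::real_vector) vfield set) \<Rightarrow> bool" where
  "unique_continuation \<F> \<longleftrightarrow>
     (\<forall>U K W. conn_open U \<and> K \<in> \<F> U \<and> open W \<and> W \<noteq> {} \<and> W \<subseteq> U \<and> (\<forall>p\<in>W. \<forall>c. K p c = 0)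
        \<longrightarrow> K = vf_zero)"

definition bounded_rank :: "('a::topological_space set \<Rightarrow> ('a, 'e::real_vector) vfield set) \<Rightarrow> bool" where
  "bounded_rank \<F> \<longleftrightarrow> (\<exists>N::nat. \<forall>U. conn_open U \<longrightarrow>
     (\<forall>B. B \<subseteq> \<F> U \<and> lin_indep B \<longrightarrow> finite B \<and> card B \<le> N))"

definition admissible :: "('a::topological_space set \<Rightarrow> ('a, 'e::real_vector) vfield set) \<Rightarrow> bool" where
  "admissible \<F> \<longleftrightarrow> unique_continuation \<F> \<and> bounded_rank \<F>"

definition germ :: "'a::topological_space \<Rightarrow> ('a, 'e) vfield \<Rightarrow> ('a, 'e) vfield set" where
  "germ p K = {K'. \<exists>W. open W \<and> p \<in> W \<and> (\<forall>x\<in>W. K' x = K x)}"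

definition germs :: "('a::topological_space set \<Rightarrow> ('a, 'e) vfield set) \<Rightarrow> 'a \<Rightarrow> ('a, 'e) vfield set set" where
  "germs \<F> p = {germ p K | K U. conn_open U \<and> p \<in> U \<and> K \<in> \<F> U}"

definition germ_indep :: "'a::topological_space \<Rightarrow> ('a, 'e::real_vector) vfield set \<Rightarrow> bool" where
  "germ_indep p B \<longleftrightarrow> (\<forall>B' c. finite B' \<and> B' \<subseteq> B \<and>
      (\<lambda>q d. \<Sum>K\<in>B'. c K *\<^sub>R K q d) \<in> germ p vf_zero \<longrightarrow> (\<forall>K\<in>B'. c K = 0))"

text \<open>\<open>\<kappa>_p = dim \<GG>_p\<close>: the maximal number of local sections near p with linearly
  independent germs (i.e. the dimension of the germ space, which is finite for
  sheaves of bounded rank).\<close>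
definition germ_dim :: "('a::topological_space set \<Rightarrow> ('a, 'e::real_vector) vfield set) \<Rightarrow> 'a \<Rightarrow> nat" where
  "germ_dim \<F> p = Sup {card B | B. finite B \<and> germ_indep p B \<and> inj_on (germ p) B \<and>
      (\<forall>K\<in>B. \<exists>U. conn_open U \<and> p \<in> U \<and> K \<in> \<F> U)}"

definition germ_transport :: "('a::topological_space set \<Rightarrow> ('a, 'e) vfield set) \<Rightarrow> (real \<Rightarrow> 'a) \<Rightarrow> real \<Rightarrow> real \<Rightarrow> (real \<Rightarrow> ('a, 'e) vfield set) \<Rightarrow> bool" where
  "germ_transport \<F> \<gamma> a b g \<longleftrightarrow>
     (\<forall>t\<in>{a..b}. g t \<in> germs \<F> (\<gamma> t)) \<and>
     (\<forall>s\<in>{a..b}. \<exists>\<epsilon>>0. \<exists>W K. conn_open W \<and> \<gamma> s \<in> W \<and> K \<in> \<F> W \<and>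
        (\<forall>t\<in>{a..b}. \<bar>t - s\<bar> < \<epsilon> \<longrightarrow> \<gamma> t \<in> W \<and> g t = germ (\<gamma> t) K))"

end

theory Submission
  imports Defs
begin

text \<open>
  Near any point \<open>\<gamma> s\<close> choose sections whose germs at \<open>\<gamma> s\<close> are independent and
  \<open>\<kappa> = germ_dim\<close> in number, and restrict them to one connected neighbourhood C. By
  unique continuation their germs remain independent at every point of C, so at the points
  where the germ dimension is still \<open>\<kappa>\<close> they span: every germ there is the germ of a single
  section over C. Hence a transport defined on \<open>[a, t]\<close> extends a little beyond t, and the
  set of such t is open and closed in \<open>[a, b]\<close>. Uniqueness is again unique continuation: two
  sections over a connected C with the same germ at one point coincide on C.
\<close>

section \<open>Topological preliminaries\<close>

lemma Icc_connected_induction: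
  fixes P :: "real \<Rightarrow> bool"
  assumes "s \<in> {a..b}" "t \<in> {a..b}" "P s"
    and local: "\<And>u. u \<in> {a..b} \<Longrightarrow>
      \<exists>e>0. \<forall>x\<in>{a..b}. \<forall>y\<in>{a..b}. \<bar>x - u\<bar> < e \<longrightarrow> \<bar>y - u\<bar> < e \<longrightarrow> P x \<longrightarrow> P y"
  shows "P t"
proof (rule connected_induction_simple[of "{a..b}" s t P, OF connected_Icc assms(1-3)])
  fix u assume u: "u \<in> {a..b}"
  then obtain e where "e > 0"
    and e: "\<forall>x\<in>{a..b}. \<forall>y\<in>{a..b}. \<bar>x - u\<bar> < e \<longrightarrow> \<bar>y - u\<bar> < e \<longrightarrow> P x \<longrightarrow> P y"
    using local by blast
  show "\<exists>T. openin (top_of_set {a..b}) T \<and> u \<in> T \<and> (\<forall>x\<in>T. \<forall>y\<in>T. P x \<longrightarrow> P y)"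
  proof (intro exI conjI)
    show "openin (top_of_set {a..b}) ({a..b} \<inter> ball u e)" by (simp add: openin_open_Int)
    show "u \<in> {a..b} \<inter> ball u e" using u \<open>e > 0\<close> by simp
    show "\<forall>x\<in>{a..b} \<inter> ball u e. \<forall>y\<in>{a..b} \<inter> ball u e. P x \<longrightarrow> P y"
      using e by (auto simp: dist_real_def abs_minus_commute)
  qed
qed

lemma continuous_on_real_nbhd:
  fixes \<gamma> :: "real \<Rightarrow> 'a::topological_space"
  assumes "continuous_on S \<gamma>" "s \<in> S" "open C" "\<gamma> s \<in> C"
  obtains \<delta> where "\<delta> > 0" "\<And>t. t \<in> S \<Longrightarrow> \<bar>t - s\<bar> < \<delta> \<Longrightarrow> \<gamma> t \<in> C"
proof -
  obtain N where N: "open N" "s \<in> N" "\<And>t. t \<in> S \<Longrightarrow> t \<in> N \<Longrightarrow> \<gamma> t \<in> C"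
    using assms unfolding continuous_on_topological by meson
  obtain \<delta> where "\<delta> > 0" "ball s \<delta> \<subseteq> N" using N(1,2) open_contains_ball by blast
  then show thesis
    using that N(3) by (auto simp: dist_real_def abs_minus_commute subset_iff)
qed

lemma smooth_manifold_conn_open_nbhd:
  fixes A :: "('a::topological_space, 'e::euclidean_space) chart set"
    and p :: 'a
  assumes "smooth_manifold A" "open N" "p \<in> N"
  obtains C where "conn_open C" "p \<in> C" "C \<subseteq> N"
proof -
  have atlas: "smooth_atlas A" using assms(1) by (simp add: smooth_manifold_def)
  then have "p \<in> \<Union>(snd ` A)" by (simp add: smooth_atlas_def)
  then obtain \<phi> V where chart: "(\<phi>, V) \<in> A" and "p \<in> V" by auto
  then have "is_chart (\<phi>, V)" using atlas by (simp add: smooth_atlas_def)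
  then have "open V" "open (\<phi> ` V)" "inj_on \<phi> V" "continuous_on V \<phi>"
    and cont_inv: "continuous_on (\<phi> ` V) (inv_into V \<phi>)"
    by (auto simp: is_chart_def)
  let ?\<psi> = "inv_into V \<phi>"
  have "open (?\<psi> -` (V \<inter> N) \<inter> \<phi> ` V)"
    using continuous_on_open_vimage[OF \<open>open (\<phi> ` V)\<close>] cont_inv \<open>open V\<close> assms(2) by blast
  moreover have "\<phi> p \<in> ?\<psi> -` (V \<inter> N) \<inter> \<phi> ` V"
    using \<open>p \<in> V\<close> assms(3) \<open>inj_on \<phi> V\<close> by auto
  ultimately obtain e where "e > 0" and ball: "ball (\<phi> p) e \<subseteq> ?\<psi> -` (V \<inter> N) \<inter> \<phi> ` V"
    using open_contains_ball by blast
  \<comment> \<open>The pull-back of a coordinate ball is connected (image of a ball) and open (preimage of a ball).\<close>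
  define C where "C = ?\<psi> ` ball (\<phi> p) e"
  have C_vimage: "C = \<phi> -` ball (\<phi> p) e \<inter> V"
  proof
    show "C \<subseteq> \<phi> -` ball (\<phi> p) e \<inter> V"
      using ball unfolding C_def by (force simp: f_inv_into_f inv_into_into)
    show "\<phi> -` ball (\<phi> p) e \<inter> V \<subseteq> C"
    proof
      fix x assume "x \<in> \<phi> -` ball (\<phi> p) e \<inter> V"
      then show "x \<in> C"
        unfolding C_def using \<open>inj_on \<phi> V\<close> by (auto intro!: image_eqI[where x = "\<phi> x"])
    qed
  qed
  have "connected C"
    unfolding C_def using ball by (intro connected_continuous_image continuous_on_subset[OF cont_inv]) auto
  moreover have "open C"
    unfolding C_vimage using \<open>continuous_on V \<phi>\<close> \<open>open V\<close> by (simp add: continuous_on_open_vimage)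
  moreover have "p \<in> C" using C_vimage \<open>p \<in> V\<close> \<open>e > 0\<close> by auto
  moreover have "C \<subseteq> N" using ball unfolding C_def by auto
  ultimately show thesis using that by (simp add: conn_open_def)
qed

section \<open>Sections and germs\<close>

lemma vf_sheaf_restrict:
  assumes "vf_sheaf A F" "conn_open U" "conn_open V" "V \<subseteq> U" "K \<in> F U"
  shows "vf_restrict V K \<in> F V"
  using assms unfolding vf_sheaf_def by simp

lemma vf_sheaf_lin_subspace:
  assumes "vf_sheaf A F" "conn_open U"
  shows "lin_subspace (F U)"
  using assms unfolding vf_sheaf_def by simp

lemma vf_sheaf_add:
  assumes "vf_sheaf A F" "conn_open U" "X \<in> F U" "Y \<in> F U"
  shows "(\<lambda>x d. X x d + Y x d) \<in> F U"
  using vf_sheaf_lin_subspace[OF assms(1,2)] assms(3,4) unfolding lin_subspace_def by blast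

lemma vf_sheaf_scaleR:
  assumes "vf_sheaf A F" "conn_open U" "X \<in> F U"
  shows "(\<lambda>x d. r *\<^sub>R X x d) \<in> F U"
  using vf_sheaf_lin_subspace[OF assms(1,2)] assms(3) unfolding lin_subspace_def by blast

lemma vf_sheaf_diff:
  assumes "vf_sheaf A F" "conn_open U" "X \<in> F U" "Y \<in> F U"
  shows "(\<lambda>x d. X x d - Y x d) \<in> F U"
  using vf_sheaf_add[OF assms(1-3) vf_sheaf_scaleR[OF assms(1,2,4), of "-1"]] by simp

lemma vf_sheaf_sum:
  assumes "vf_sheaf A F" "conn_open U" "finite B" "B \<subseteq> F U"
  shows "(\<lambda>x d. \<Sum>K\<in>B. c K *\<^sub>R K x d) \<in> F U"
  using assms(3,4)
proof (induction B rule: finite_induct)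
  case empty
  then show ?case using vf_sheaf_lin_subspace[OF assms(1,2)] by (simp add: lin_subspace_def vf_zero_def)
next
  case (insert L B)
  then have "L \<in> F U" "(\<lambda>x d. \<Sum>K\<in>B. c K *\<^sub>R K x d) \<in> F U" by simp_all
  from vf_sheaf_add[OF assms(1,2) vf_sheaf_scaleR[OF assms(1,2) this(1)] this(2)]
  show ?case using insert by simp
qed

lemma vf_restrict_apply [simp]: "x \<in> V \<Longrightarrow> vf_restrict V K x = K x"
  by (simp add: vf_restrict_def)

lemma vf_eq_zeroD: "X = vf_zero \<Longrightarrow> X x d = 0"
  by (simp add: vf_zero_def)

lemma germ_eq_iff: "germ p X = germ p Y \<longleftrightarrow> (\<exists>W. open W \<and> p \<in> W \<and> (\<forall>x\<in>W. X x = Y x))"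
proof
  assume "germ p X = germ p Y"
  moreover have "X \<in> germ p X" unfolding germ_def by blast
  ultimately have "X \<in> germ p Y" by simp
  then show "\<exists>W. open W \<and> p \<in> W \<and> (\<forall>x\<in>W. X x = Y x)" unfolding germ_def by simp
next
  assume "\<exists>W. open W \<and> p \<in> W \<and> (\<forall>x\<in>W. X x = Y x)"
  then obtain W where W: "open W" "p \<in> W" "\<forall>x\<in>W. X x = Y x" by blast
  have "(\<exists>W'. open W' \<and> p \<in> W' \<and> (\<forall>x\<in>W'. K x = X x)) \<longleftrightarrow>
        (\<exists>W'. open W' \<and> p \<in> W' \<and> (\<forall>x\<in>W'. K x = Y x))" for K
  proof
    assume "\<exists>W'. open W' \<and> p \<in> W' \<and> (\<forall>x\<in>W'. K x = X x)"
    then obtain W' where "open W'" "p \<in> W'" "\<forall>x\<in>W'. K x = X x" by blast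
    then show "\<exists>W'. open W' \<and> p \<in> W' \<and> (\<forall>x\<in>W'. K x = Y x)"
      using W by (intro exI[of _ "W \<inter> W'"]) auto
  next
    assume "\<exists>W'. open W' \<and> p \<in> W' \<and> (\<forall>x\<in>W'. K x = Y x)"
    then obtain W' where "open W'" "p \<in> W'" "\<forall>x\<in>W'. K x = Y x" by blast
    then show "\<exists>W'. open W' \<and> p \<in> W' \<and> (\<forall>x\<in>W'. K x = X x)"
      using W by (intro exI[of _ "W \<inter> W'"]) auto
  qed
  then show "germ p X = germ p Y" unfolding germ_def by simp
qed

lemma germ_eqI_on: "open C \<Longrightarrow> p \<in> C \<Longrightarrow> \<forall>x\<in>C. X x = Y x \<Longrightarrow> germ p X = germ p Y"
  unfolding germ_eq_iff by blast

lemma mem_germ_zero_iff: "S \<in> germ p vf_zero \<longleftrightarrow> (\<exists>W. open W \<and> p \<in> W \<and> (\<forall>x\<in>W. \<forall>d. S x d = 0))"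
  unfolding germ_def vf_zero_def by (auto simp: fun_eq_iff)

lemma germ_indepD:
  assumes "germ_indep p B" "finite B'" "B' \<subseteq> B" "(\<lambda>x d. \<Sum>K\<in>B'. c K *\<^sub>R K x d) \<in> germ p vf_zero"
  shows "\<forall>K\<in>B'. c K = 0"
  using assms unfolding germ_indep_def by blast

lemma germ_indep_imp_inj_on: "germ_indep q B \<Longrightarrow> inj_on (germ q) B"
proof (rule inj_onI, rule ccontr)
  fix K1 K2 assume indep: "germ_indep q B" and K: "K1 \<in> B" "K2 \<in> B" "germ q K1 = germ q K2" "K1 \<noteq> K2"
  define c where "c = (\<lambda>K. if K = K1 then 1 else (-1::real))"
  obtain W where W: "open W" "q \<in> W" "\<forall>x\<in>W. K1 x = K2 x" using K(3) germ_eq_iff by metis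
  then have "\<forall>x\<in>W. \<forall>d. (\<Sum>K\<in>{K1, K2}. c K *\<^sub>R K x d) = 0"
    using K(4) by (simp add: c_def)
  then have "(\<lambda>x d. \<Sum>K\<in>{K1, K2}. c K *\<^sub>R K x d) \<in> germ q vf_zero"
    unfolding mem_germ_zero_iff using W(1,2) by blast
  moreover have "finite {K1, K2}" "{K1, K2} \<subseteq> B" using K(1,2) by auto
  ultimately have "c K1 = 0" using germ_indepD[OF indep] by blast
  then show False by (simp add: c_def)
qed

section \<open>Independent germs and the germ dimension\<close>

lemma inj_on_vf_restrict:
  assumes "germ_indep p B" "open C" "p \<in> C"
  shows "inj_on (vf_restrict C) B"
proof (rule inj_onI)
  fix K1 K2 assume K: "K1 \<in> B" "K2 \<in> B" "vf_restrict C K1 = vf_restrict C K2"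
  have "\<forall>x\<in>C. K1 x = K2 x"
    using K(3) by (metis vf_restrict_apply)
  then have "germ p K1 = germ p K2" using germ_eqI_on assms(2,3) by blast
  then show "K1 = K2" using germ_indep_imp_inj_on[OF assms(1)] K(1,2) by (simp add: inj_on_def)
qed

definition germ_span :: "'a::topological_space \<Rightarrow> ('a, 'e::real_vector) vfield set \<Rightarrow> ('a, 'e) vfield set set" where
  "germ_span q B = {g. \<exists>c. g = germ q (\<lambda>x d. \<Sum>K\<in>B. c K *\<^sub>R K x d)}"

lemma germ_span_mem:
  assumes "finite B" "L \<in> B"
  shows "germ q L \<in> germ_span q B"
proof -
  have "(\<lambda>x d. \<Sum>K\<in>B. (if K = L then 1 else 0) *\<^sub>R K x d) = L"
  proof (intro ext)
    fix x d
    have "(\<Sum>K\<in>B. (if K = L then 1 else 0) *\<^sub>R K x d) = (\<Sum>K\<in>B. if K = L then L x d else 0)"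
      by (rule sum.cong) simp_all
    also have "\<dots> = L x d" using assms by simp
    finally show "(\<Sum>K\<in>B. (if K = L then 1 else 0) *\<^sub>R K x d) = L x d" .
  qed
  then show ?thesis
    unfolding germ_span_def by (intro CollectI exI[of _ "\<lambda>K. if K = L then 1 else 0"]) simp
qed

lemma germ_span_of_vanishing_combination:
  assumes "finite B" "finite B'" "B' \<subseteq> insert L B" "L \<in> B'" "c L \<noteq> 0" "open W" "q \<in> W"
    and vanish: "\<And>x d. x \<in> W \<Longrightarrow> (\<Sum>K\<in>B'. c K *\<^sub>R K x d) = 0"
  shows "germ q L \<in> germ_span q B"
proof -
  define B1 where "B1 = B' - {L}"
  have "B1 \<subseteq> B" using assms(3) unfolding B1_def by auto
  define c' where "c' K = (if K \<in> B1 then - c K / c L else 0)" for K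
  have L_comb: "L x d = (\<Sum>K\<in>B. c' K *\<^sub>R K x d)" if "x \<in> W" for x d
  proof -
    have "c L *\<^sub>R L x d + (\<Sum>K\<in>B1. c K *\<^sub>R K x d) = 0"
      using sum.remove[OF assms(2,4), of "\<lambda>K. c K *\<^sub>R K x d"] vanish[OF that] unfolding B1_def by simp
    then have eq: "c L *\<^sub>R L x d = - (\<Sum>K\<in>B1. c K *\<^sub>R K x d)"
      by (simp add: add_eq_0_iff2)
    have "L x d = (1 / c L) *\<^sub>R (c L *\<^sub>R L x d)" using \<open>c L \<noteq> 0\<close> by simp
    also have "\<dots> = (\<Sum>K\<in>B1. (- c K / c L) *\<^sub>R K x d)"
      unfolding eq by (simp add: scaleR_sum_right sum_negf)
    also have "\<dots> = (\<Sum>K\<in>B. if K \<in> B1 then (- c K / c L) *\<^sub>R K x d else 0)"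
      using \<open>B1 \<subseteq> B\<close> by (simp add: sum.inter_restrict[OF \<open>finite B\<close>, symmetric] Int_absorb1)
    also have "\<dots> = (\<Sum>K\<in>B. c' K *\<^sub>R K x d)"
      by (rule sum.cong) (auto simp: c'_def)
    finally show ?thesis .
  qed
  then have "\<forall>x\<in>W. L x = (\<lambda>d. \<Sum>K\<in>B. c' K *\<^sub>R K x d)"
    by (intro ballI ext) (simp add: L_comb)
  then have "germ q L = germ q (\<lambda>x d. \<Sum>K\<in>B. c' K *\<^sub>R K x d)"
    unfolding germ_eq_iff using assms(6,7) by blast
  then show ?thesis unfolding germ_span_def by blast
qed

lemma germ_indep_insert:
  assumes "finite B" and indep: "germ_indep q B" and L: "germ q L \<notin> germ_span q B"
  shows "germ_indep q (insert L B)"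
  unfolding germ_indep_def
proof (intro allI impI)
  fix B' c assume "finite B' \<and> B' \<subseteq> insert L B \<and> (\<lambda>x d. \<Sum>K\<in>B'. c K *\<^sub>R K x d) \<in> germ q vf_zero"
  then have B': "finite B'" "B' \<subseteq> insert L B"
    and "(\<lambda>x d. \<Sum>K\<in>B'. c K *\<^sub>R K x d) \<in> germ q vf_zero" by blast+
  then obtain W where W: "open W" "q \<in> W" and vanish: "\<And>x d. x \<in> W \<Longrightarrow> (\<Sum>K\<in>B'. c K *\<^sub>R K x d) = 0"
    unfolding mem_germ_zero_iff by blast
  have cL: "c L = 0" if "L \<in> B'"
    using germ_span_of_vanishing_combination[where c = c, OF \<open>finite B\<close> B' that _ W vanish] L by blast
  define B1 where "B1 = B' - {L}"
  have "finite B1" "B1 \<subseteq> B" using B' unfolding B1_def by auto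
  have "(\<Sum>K\<in>B1. c K *\<^sub>R K x d) = 0" if "x \<in> W" for x d
  proof (cases "L \<in> B'")
    case True
    then show ?thesis
      using sum.remove[OF B'(1) True, of "\<lambda>K. c K *\<^sub>R K x d"] vanish[OF that] cL[OF True]
      unfolding B1_def by simp
  next
    case False
    then show ?thesis using vanish[OF that] unfolding B1_def by simp
  qed
  then have "(\<lambda>x d. \<Sum>K\<in>B1. c K *\<^sub>R K x d) \<in> germ q vf_zero"
    unfolding mem_germ_zero_iff using W by blast
  then have "c K = 0" if "K \<in> B1" for K
    using germ_indepD[OF indep \<open>finite B1\<close> \<open>B1 \<subseteq> B\<close>] that by blast
  then show "\<forall>K\<in>B'. c K = 0" using cL unfolding B1_def by blast
qed

definition germ_indep_cards :: "('a::topological_space set \<Rightarrow> ('a, 'e::real_vector) vfield set) \<Rightarrow> 'a \<Rightarrow> nat set" where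
  "germ_indep_cards F p = {card B | B. finite B \<and> germ_indep p B \<and> inj_on (germ p) B \<and>
      (\<forall>K\<in>B. \<exists>U. conn_open U \<and> p \<in> U \<and> K \<in> F U)}"

lemma germ_dim_eq_Sup: "germ_dim F p = Sup (germ_indep_cards F p)"
  unfolding germ_dim_def germ_indep_cards_def ..

lemma card_in_germ_indep_cards:
  assumes "finite B" "germ_indep p B" "\<forall>K\<in>B. \<exists>U. conn_open U \<and> p \<in> U \<and> K \<in> F U"
  shows "card B \<in> germ_indep_cards F p"
  unfolding germ_indep_cards_def using assms germ_indep_imp_inj_on by blast

lemma germ_indep_card_max_spans:
  assumes "finite B" "germ_indep q B" "\<forall>K\<in>B. \<exists>U. conn_open U \<and> q \<in> U \<and> K \<in> F U"
    and max: "\<And>n. n \<in> germ_indep_cards F q \<Longrightarrow> n \<le> card B"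
    and "conn_open U" "q \<in> U" "L \<in> F U"
  shows "germ q L \<in> germ_span q B"
proof (rule ccontr)
  assume L: "germ q L \<notin> germ_span q B"
  then have "L \<notin> B" using germ_span_mem[OF assms(1)] by blast
  have "card (insert L B) \<in> germ_indep_cards F q"
    using assms(1,3,5-7) germ_indep_insert[OF assms(1,2) L] by (intro card_in_germ_indep_cards) auto
  then have "card (insert L B) \<le> card B" by (rule max)
  then show False using \<open>L \<notin> B\<close> assms(1) by simp
qed

locale vf_sheaf_unique_continuation =
  fixes A :: "('a::topological_space, 'e::euclidean_space) chart set"
    and F :: "'a set \<Rightarrow> ('a, 'e) vfield set"
  assumes manifold: "smooth_manifold A"
    and sheaf: "vf_sheaf A F"
    and unique_cont: "unique_continuation F"
begin

lemma unique_continuationD: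
  assumes "conn_open U" "K \<in> F U" "open W" "W \<noteq> {}" "W \<subseteq> U" "\<And>x d. x \<in> W \<Longrightarrow> K x d = 0"
  shows "K = vf_zero"
  using unique_cont assms unfolding unique_continuation_def by blast

lemma germ_eq_iff_eq_on:
  assumes C: "conn_open C" "q \<in> C" and K: "K1 \<in> F C" "K2 \<in> F C"
  shows "germ q K1 = germ q K2 \<longleftrightarrow> (\<forall>x\<in>C. K1 x = K2 x)"
proof
  assume "germ q K1 = germ q K2"
  then obtain W where W: "open W" "q \<in> W" "\<forall>x\<in>W. K1 x = K2 x" by (auto simp: germ_eq_iff)
  have "(\<lambda>x d. K1 x d - K2 x d) = vf_zero"
  proof (rule unique_continuationD[OF C(1) vf_sheaf_diff[OF sheaf C(1) K]])
    show "open (W \<inter> C)" "W \<inter> C \<noteq> {}" "W \<inter> C \<subseteq> C"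
      using W C by (auto simp: conn_open_def)
    show "\<And>x d. x \<in> W \<inter> C \<Longrightarrow> K1 x d - K2 x d = 0" using W(3) by simp
  qed
  from vf_eq_zeroD[OF this] show "\<forall>x\<in>C. K1 x = K2 x" by (simp add: fun_eq_iff)
next
  assume "\<forall>x\<in>C. K1 x = K2 x"
  then show "germ q K1 = germ q K2" using germ_eqI_on[of C q K1 K2] C by (simp add: conn_open_def)
qed

lemma common_section_domain:
  assumes "finite B" "\<forall>K\<in>B. \<exists>U. conn_open U \<and> p \<in> U \<and> K \<in> F U"
  obtains C where "conn_open C" "p \<in> C" "\<forall>K\<in>B. vf_restrict C K \<in> F C"
proof -
  obtain U where U: "\<forall>K\<in>B. conn_open (U K) \<and> p \<in> U K \<and> K \<in> F (U K)"
    using bchoice[OF assms(2)] by blast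
  have "open (\<Inter>(U ` B))" "p \<in> \<Inter>(U ` B)"
    using U assms(1) by (auto simp: conn_open_def)
  then obtain C where C: "conn_open C" "p \<in> C" "C \<subseteq> \<Inter>(U ` B)"
    by (rule smooth_manifold_conn_open_nbhd[OF manifold])
  have "vf_restrict C K \<in> F C" if "K \<in> B" for K
    using vf_sheaf_restrict[OF sheaf _ C(1)] U C(3) that by blast
  then show thesis using that C by blast
qed

lemma restrict_germ_indep_vanishing:
  assumes B: "finite B" "germ_indep p B" and C: "conn_open C" "p \<in> C"
    and restr: "\<forall>K\<in>B. vf_restrict C K \<in> F C"
    and B': "B' \<subseteq> vf_restrict C ` B" and W: "open W" "W \<noteq> {}" "W \<subseteq> C"
    and vanish: "\<And>x d. x \<in> W \<Longrightarrow> (\<Sum>K\<in>B'. c K *\<^sub>R K x d) = 0"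
  shows "\<forall>K\<in>B'. c K = 0"
proof -
  obtain B0 where B0: "B0 \<subseteq> B" "B' = vf_restrict C ` B0" using B' subset_image_iff by metis
  have inj: "inj_on (vf_restrict C) B0"
    using inj_on_vf_restrict[OF B(2)] C B0(1) by (auto simp: conn_open_def intro: inj_on_subset)
  have "finite B'" using B' B(1) by (meson finite_imageI finite_subset)
  have "B' \<subseteq> F C" using B' restr by blast
  \<comment> \<open>By unique continuation the combination vanishes on all of C, in particular near p.\<close>
  then have "(\<lambda>x d. \<Sum>K\<in>B'. c K *\<^sub>R K x d) = vf_zero"
    by (intro unique_continuationD[OF C(1) vf_sheaf_sum[OF sheaf C(1) \<open>finite B'\<close> \<open>B' \<subseteq> F C\<close>] W vanish])
  from vf_eq_zeroD[OF this] have zero: "(\<Sum>K\<in>B'. c K *\<^sub>R K x d) = 0" for x d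
    by simp
  have "(\<Sum>K\<in>B0. c (vf_restrict C K) *\<^sub>R K x d) = 0" if "x \<in> C" for x d
  proof -
    have "(\<Sum>K\<in>B0. c (vf_restrict C K) *\<^sub>R K x d) = (\<Sum>K\<in>B0. c (vf_restrict C K) *\<^sub>R vf_restrict C K x d)"
      using that by simp
    also have "\<dots> = (\<Sum>K\<in>B'. c K *\<^sub>R K x d)"
      unfolding B0(2) sum.reindex[OF inj] by simp
    finally show ?thesis using zero by simp
  qed
  then have "(\<lambda>x d. \<Sum>K\<in>B0. c (vf_restrict C K) *\<^sub>R K x d) \<in> germ p vf_zero"
    unfolding mem_germ_zero_iff using C by (auto simp: conn_open_def)
  then have "\<forall>K\<in>B0. c (vf_restrict C K) = 0"
    by (rule germ_indepD[OF B(2) finite_subset[OF B0(1) B(1)] B0(1)])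
  then show ?thesis using B0(2) by blast
qed

lemma lin_indep_restrict:
  assumes "finite B" "germ_indep p B" "conn_open C" "p \<in> C" "\<forall>K\<in>B. vf_restrict C K \<in> F C"
  shows "lin_indep (vf_restrict C ` B)"
  unfolding lin_indep_def
proof (intro allI impI)
  fix B' c assume h: "finite B' \<and> B' \<subseteq> vf_restrict C ` B \<and> (\<lambda>p d. \<Sum>K\<in>B'. c K *\<^sub>R K p d) = vf_zero"
  then have B': "B' \<subseteq> vf_restrict C ` B" by blast
  have "(\<Sum>K\<in>B'. c K *\<^sub>R K x d) = 0" for x d
    using vf_eq_zeroD[OF conjunct2[OF conjunct2[OF h]], of x d] by simp
  then show "\<forall>K\<in>B'. c K = 0"
    using restrict_germ_indep_vanishing[OF assms B', of C c] assms(3,4) by (auto simp: conn_open_def)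
qed

lemma germ_indep_restrict:
  assumes "finite B" "germ_indep p B" "conn_open C" "p \<in> C" "\<forall>K\<in>B. vf_restrict C K \<in> F C"
    and "q \<in> C"
  shows "germ_indep q (vf_restrict C ` B)"
  unfolding germ_indep_def
proof (intro allI impI)
  fix B' c assume "finite B' \<and> B' \<subseteq> vf_restrict C ` B \<and> (\<lambda>x d. \<Sum>K\<in>B'. c K *\<^sub>R K x d) \<in> germ q vf_zero"
  then obtain W where "B' \<subseteq> vf_restrict C ` B" "open W" "q \<in> W"
    and "\<forall>x\<in>W. \<forall>d. (\<Sum>K\<in>B'. c K *\<^sub>R K x d) = 0"
    unfolding mem_germ_zero_iff by blast
  then show "\<forall>K\<in>B'. c K = 0"
    using restrict_germ_indep_vanishing[OF assms(1-5), of B' "W \<inter> C" c] assms(3,6)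
    by (auto simp: conn_open_def)
qed

end

locale admissible_vf_sheaf = vf_sheaf_unique_continuation +
  assumes bounded: "bounded_rank F"
begin

lemma finite_germ_indep_cards: "finite (germ_indep_cards F p)"
proof -
  obtain N where N: "\<And>U B. conn_open U \<Longrightarrow> B \<subseteq> F U \<Longrightarrow> lin_indep B \<Longrightarrow> card B \<le> N"
    using bounded unfolding bounded_rank_def by blast
  have "n \<le> N" if n: "n \<in> germ_indep_cards F p" for n
  proof -
    obtain B where B: "n = card B" "finite B" "germ_indep p B" "\<forall>K\<in>B. \<exists>U. conn_open U \<and> p \<in> U \<and> K \<in> F U"
      using n unfolding germ_indep_cards_def by blast
    obtain C where C: "conn_open C" "p \<in> C" "\<forall>K\<in>B. vf_restrict C K \<in> F C"
      using common_section_domain[OF B(2,4)] by blast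
    have "card (vf_restrict C ` B) \<le> N"
      using N[OF C(1)] C(3) lin_indep_restrict[OF B(2,3) C] by blast
    moreover have "card (vf_restrict C ` B) = card B"
      using card_image inj_on_vf_restrict[OF B(3)] C(1,2) by (auto simp: conn_open_def)
    ultimately show ?thesis using B(1) by simp
  qed
  then show ?thesis using finite_nat_set_iff_bounded_le by blast
qed

lemma germ_dim_in_germ_indep_cards: "germ_dim F p \<in> germ_indep_cards F p"
  and germ_indep_cards_le_germ_dim: "n \<in> germ_indep_cards F p \<Longrightarrow> n \<le> germ_dim F p"
proof -
  note fin = finite_germ_indep_cards[of p]
  have "0 \<in> germ_indep_cards F p"
    using card_in_germ_indep_cards[where B = "{}" and F = F and p = p] by (simp add: germ_indep_def)
  then have ne: "germ_indep_cards F p \<noteq> {}" by blast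
  have "germ_dim F p = Max (germ_indep_cards F p)"
    unfolding germ_dim_eq_Sup by (rule cSup_eq_Max[OF fin ne])
  then show "germ_dim F p \<in> germ_indep_cards F p" "n \<in> germ_indep_cards F p \<Longrightarrow> n \<le> germ_dim F p"
    using Max_in[OF fin ne] Max_ge[OF fin] by simp_all
qed

lemma germs_of_equal_dim_extend_to_nbhd:
  "\<exists>C. conn_open C \<and> p \<in> C \<and>
     (\<forall>q\<in>C. germ_dim F q = germ_dim F p \<longrightarrow> (\<forall>g\<in>germs F q. \<exists>K\<in>F C. g = germ q K))"
proof -
  obtain B where B: "germ_dim F p = card B" "finite B" "germ_indep p B"
    "\<forall>K\<in>B. \<exists>U. conn_open U \<and> p \<in> U \<and> K \<in> F U"
    using germ_dim_in_germ_indep_cards[of p] unfolding germ_indep_cards_def by blast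
  obtain C where C: "conn_open C" "p \<in> C" "\<forall>K\<in>B. vf_restrict C K \<in> F C"
    using common_section_domain[OF B(2,4)] by blast
  \<comment> \<open>At points of C with the same germ dimension the restricted family stays independent and is
    maximal, hence spans.\<close>
  let ?BC = "vf_restrict C ` B"
  have card_BC: "card ?BC = card B"
    using card_image inj_on_vf_restrict[OF B(3)] C(1,2) by (auto simp: conn_open_def)
  have BC: "finite ?BC" "?BC \<subseteq> F C" using B(2) C(3) by auto
  have "\<exists>K\<in>F C. g = germ q K"
    if q: "q \<in> C" "germ_dim F q = germ_dim F p" and g: "g \<in> germs F q" for q g
  proof -
    obtain L U where L: "conn_open U" "q \<in> U" "L \<in> F U" "g = germ q L"
      using g unfolding germs_def by blast
    have near: "\<forall>K\<in>?BC. \<exists>U. conn_open U \<and> q \<in> U \<and> K \<in> F U" using BC(2) C(1) q(1) by blast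
    have max: "n \<le> card ?BC" if "n \<in> germ_indep_cards F q" for n
      using germ_indep_cards_le_germ_dim[OF that] q(2) B(1) card_BC by simp
    have "germ q L \<in> germ_span q ?BC"
      by (rule germ_indep_card_max_spans[OF BC(1) germ_indep_restrict[OF B(2,3) C q(1)] near max L(1-3)])
    then obtain c where "g = germ q (\<lambda>x d. \<Sum>K\<in>?BC. c K *\<^sub>R K x d)"
      unfolding germ_span_def L(4) by blast
    moreover have "(\<lambda>x d. \<Sum>K\<in>?BC. c K *\<^sub>R K x d) \<in> F C" by (rule vf_sheaf_sum[OF sheaf C(1) BC])
    ultimately show ?thesis by blast
  qed
  then show ?thesis using C(1,2) by blast
qed

end

section \<open>Transport of germs\<close>

definition locally_section_germs ::
    "('a::topological_space set \<Rightarrow> ('a, 'e) vfield set) \<Rightarrow> (real \<Rightarrow> 'a) \<Rightarrow> real set \<Rightarrow>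
     (real \<Rightarrow> ('a, 'e) vfield set) \<Rightarrow> real \<Rightarrow> bool"
  where "locally_section_germs F \<gamma> S g s \<longleftrightarrow> (\<exists>\<epsilon>>0. \<exists>W K. conn_open W \<and> K \<in> F W \<and>
     (\<forall>t\<in>S. \<bar>t - s\<bar> < \<epsilon> \<longrightarrow> \<gamma> t \<in> W \<and> g t = germ (\<gamma> t) K))"

lemma locally_section_germsI:
  assumes "\<epsilon> > 0" "conn_open W" "K \<in> F W"
    "\<And>t. t \<in> S \<Longrightarrow> \<bar>t - s\<bar> < \<epsilon> \<Longrightarrow> \<gamma> t \<in> W \<and> g t = germ (\<gamma> t) K"
  shows "locally_section_germs F \<gamma> S g s"
  unfolding locally_section_germs_def using assms by blast

lemma locally_section_germsE:
  assumes "locally_section_germs F \<gamma> S g s"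
  obtains \<epsilon> W K where "\<epsilon> > 0" "conn_open W" "K \<in> F W"
    "\<And>t. t \<in> S \<Longrightarrow> \<bar>t - s\<bar> < \<epsilon> \<Longrightarrow> \<gamma> t \<in> W \<and> g t = germ (\<gamma> t) K"
  using assms unfolding locally_section_germs_def by (auto intro!: that)

lemma germ_transport_iff_locally_section_germs:
  "germ_transport F \<gamma> a b g \<longleftrightarrow> (\<forall>s\<in>{a..b}. locally_section_germs F \<gamma> {a..b} g s)"
proof
  assume "germ_transport F \<gamma> a b g"
  then show "\<forall>s\<in>{a..b}. locally_section_germs F \<gamma> {a..b} g s"
    unfolding germ_transport_def locally_section_germs_def by blast
next
  assume local: "\<forall>s\<in>{a..b}. locally_section_germs F \<gamma> {a..b} g s"
  have "g s \<in> germs F (\<gamma> s) \<and> (\<exists>\<epsilon>>0. \<exists>W K. conn_open W \<and> \<gamma> s \<in> W \<and> K \<in> F W \<and>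
     (\<forall>t\<in>{a..b}. \<bar>t - s\<bar> < \<epsilon> \<longrightarrow> \<gamma> t \<in> W \<and> g t = germ (\<gamma> t) K))" if s: "s \<in> {a..b}" for s
  proof -
    obtain \<epsilon> W K where "\<epsilon> > 0" "conn_open W" "K \<in> F W"
      and near: "\<And>t. t \<in> {a..b} \<Longrightarrow> \<bar>t - s\<bar> < \<epsilon> \<Longrightarrow> \<gamma> t \<in> W \<and> g t = germ (\<gamma> t) K"
      using local s locally_section_germsE by metis
    moreover have "\<gamma> s \<in> W" "g s = germ (\<gamma> s) K" using near[OF s] \<open>\<epsilon> > 0\<close> by auto
    ultimately show ?thesis unfolding germs_def by blast
  qed
  then show "germ_transport F \<gamma> a b g" unfolding germ_transport_def by blast
qed

lemma germ_transportI:
  "(\<And>s. s \<in> {a..b} \<Longrightarrow> locally_section_germs F \<gamma> {a..b} g s) \<Longrightarrow> germ_transport F \<gamma> a b g"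
  by (simp add: germ_transport_iff_locally_section_germs)

lemma germ_transportE:
  assumes "germ_transport F \<gamma> a b g" "s \<in> {a..b}"
  obtains \<epsilon> W K where "\<epsilon> > 0" "conn_open W" "K \<in> F W"
    "\<And>t. t \<in> {a..b} \<Longrightarrow> \<bar>t - s\<bar> < \<epsilon> \<Longrightarrow> \<gamma> t \<in> W \<and> g t = germ (\<gamma> t) K"
  using assms locally_section_germsE unfolding germ_transport_iff_locally_section_germs by metis

lemma germ_transport_in_germs:
  "germ_transport F \<gamma> a b g \<Longrightarrow> t \<in> {a..b} \<Longrightarrow> g t \<in> germs F (\<gamma> t)"
  unfolding germ_transport_def by blast

lemma germ_transport_subinterval:
  assumes g: "germ_transport F \<gamma> a b g" and "a \<le> c" "d \<le> b"
  shows "germ_transport F \<gamma> c d g"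
proof (rule germ_transportI)
  fix s assume "s \<in> {c..d}"
  then have "s \<in> {a..b}" using assms by auto
  then obtain \<epsilon> W K where "\<epsilon> > 0" "conn_open W" "K \<in> F W"
    and near: "\<And>t. t \<in> {a..b} \<Longrightarrow> \<bar>t - s\<bar> < \<epsilon> \<Longrightarrow> \<gamma> t \<in> W \<and> g t = germ (\<gamma> t) K"
    using germ_transportE[OF g] by blast
  then show "locally_section_germs F \<gamma> {c..d} g s"
    using assms(2,3) by (intro locally_section_germsI[of \<epsilon> W K]) auto
qed

lemma germ_transport_section:
  assumes "conn_open C" "K \<in> F C" "\<And>t. t \<in> {c..d} \<Longrightarrow> \<gamma> t \<in> C"
  shows "germ_transport F \<gamma> c d (\<lambda>t. germ (\<gamma> t) K)"
  using assms by (intro germ_transportI locally_section_germsI[of 1 C K]) auto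

context vf_sheaf_unique_continuation
begin

lemma germ_transports_common_domain:
  assumes cont: "continuous_on S \<gamma>" and "{a..b} \<subseteq> S" "{c..d} \<subseteq> S"
    and g: "germ_transport F \<gamma> a b g" and h: "germ_transport F \<gamma> c d h"
    and s: "s \<in> {a..b}" "s \<in> {c..d}"
  obtains \<epsilon> C K1 K2 where "\<epsilon> > 0" "conn_open C" "K1 \<in> F C" "K2 \<in> F C"
    "\<And>t. t \<in> {a..b} \<Longrightarrow> \<bar>t - s\<bar> < \<epsilon> \<Longrightarrow> \<gamma> t \<in> C \<and> g t = germ (\<gamma> t) K1"
    "\<And>t. t \<in> {c..d} \<Longrightarrow> \<bar>t - s\<bar> < \<epsilon> \<Longrightarrow> \<gamma> t \<in> C \<and> h t = germ (\<gamma> t) K2"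
proof -
  obtain \<epsilon>1 W1 K1 where "\<epsilon>1 > 0" "conn_open W1" "K1 \<in> F W1"
    and near1: "\<And>t. t \<in> {a..b} \<Longrightarrow> \<bar>t - s\<bar> < \<epsilon>1 \<Longrightarrow> \<gamma> t \<in> W1 \<and> g t = germ (\<gamma> t) K1"
    using germ_transportE[OF g s(1)] by blast
  obtain \<epsilon>2 W2 K2 where "\<epsilon>2 > 0" "conn_open W2" "K2 \<in> F W2"
    and near2: "\<And>t. t \<in> {c..d} \<Longrightarrow> \<bar>t - s\<bar> < \<epsilon>2 \<Longrightarrow> \<gamma> t \<in> W2 \<and> h t = germ (\<gamma> t) K2"
    using germ_transportE[OF h s(2)] by blast
  have "open (W1 \<inter> W2)" "\<gamma> s \<in> W1 \<inter> W2"
    using \<open>conn_open W1\<close> \<open>conn_open W2\<close> near1[OF s(1)] near2[OF s(2)] \<open>\<epsilon>1 > 0\<close> \<open>\<epsilon>2 > 0\<close>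
    by (auto simp: conn_open_def)
  then obtain C where C: "conn_open C" "\<gamma> s \<in> C" "C \<subseteq> W1 \<inter> W2"
    by (rule smooth_manifold_conn_open_nbhd[OF manifold])
  have "s \<in> S" "open C" using s(1) assms(2) C(1) by (auto simp: conn_open_def)
  then obtain \<delta> where "\<delta> > 0" and in_C: "\<And>t. t \<in> S \<Longrightarrow> \<bar>t - s\<bar> < \<delta> \<Longrightarrow> \<gamma> t \<in> C"
    using continuous_on_real_nbhd[OF cont _ _ C(2)] by blast
  have restr: "vf_restrict C K1 \<in> F C" "vf_restrict C K2 \<in> F C"
    using vf_sheaf_restrict[OF sheaf \<open>conn_open W1\<close> C(1) _ \<open>K1 \<in> F W1\<close>]
      vf_sheaf_restrict[OF sheaf \<open>conn_open W2\<close> C(1) _ \<open>K2 \<in> F W2\<close>] C(3) by auto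
  have germ_restr: "germ x K = germ x (vf_restrict C K)" if "x \<in> C" for x K
    using germ_eqI_on[OF \<open>open C\<close> that, of K "vf_restrict C K"] by simp
  define \<epsilon> where "\<epsilon> = min \<delta> (min \<epsilon>1 \<epsilon>2)"
  have "\<epsilon> > 0" using \<open>\<delta> > 0\<close> \<open>\<epsilon>1 > 0\<close> \<open>\<epsilon>2 > 0\<close> by (simp add: \<epsilon>_def)
  moreover have "\<gamma> t \<in> C \<and> g t = germ (\<gamma> t) (vf_restrict C K1)" if "t \<in> {a..b}" "\<bar>t - s\<bar> < \<epsilon>" for t
  proof -
    have "\<gamma> t \<in> C" using in_C that assms(2) by (auto simp: \<epsilon>_def)
    then show ?thesis using near1[OF that(1)] that(2) germ_restr[of "\<gamma> t" K1] by (simp add: \<epsilon>_def)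
  qed
  moreover have "\<gamma> t \<in> C \<and> h t = germ (\<gamma> t) (vf_restrict C K2)" if "t \<in> {c..d}" "\<bar>t - s\<bar> < \<epsilon>" for t
  proof -
    have "\<gamma> t \<in> C" using in_C that assms(3) by (auto simp: \<epsilon>_def)
    then show ?thesis using near2[OF that(1)] that(2) germ_restr[of "\<gamma> t" K2] by (simp add: \<epsilon>_def)
  qed
  ultimately show thesis using that C(1) restr by blast
qed

lemma germ_transport_glue:
  assumes cont: "continuous_on {a..b} \<gamma>" and m: "a \<le> m" "m \<le> b"
    and g: "germ_transport F \<gamma> a m g" and h: "germ_transport F \<gamma> m b h" and "g m = h m"
  shows "germ_transport F \<gamma> a b (\<lambda>t. if t \<le> m then g t else h t)"
proof (rule germ_transportI)
  fix s assume s: "s \<in> {a..b}"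
  let ?f = "\<lambda>t. if t \<le> m then g t else h t"
  consider "s < m" | "m < s" | "s = m" by linarith
  then show "locally_section_germs F \<gamma> {a..b} ?f s"
  proof cases
    case 1
    then obtain \<epsilon> W K where "\<epsilon> > 0" "conn_open W" "K \<in> F W"
      and near: "\<And>t. t \<in> {a..m} \<Longrightarrow> \<bar>t - s\<bar> < \<epsilon> \<Longrightarrow> \<gamma> t \<in> W \<and> g t = germ (\<gamma> t) K"
      using germ_transportE[OF g, of s] s by auto
    show ?thesis
    proof (rule locally_section_germsI[of "min \<epsilon> (m - s)" W K])
      fix t assume "t \<in> {a..b}" "\<bar>t - s\<bar> < min \<epsilon> (m - s)"
      then have "t \<in> {a..m}" "\<bar>t - s\<bar> < \<epsilon>" "t \<le> m" by auto
      then show "\<gamma> t \<in> W \<and> ?f t = germ (\<gamma> t) K" using near by simp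
    qed (use \<open>s < m\<close> \<open>\<epsilon> > 0\<close> \<open>conn_open W\<close> \<open>K \<in> F W\<close> in auto)
  next
    case 2
    then obtain \<epsilon> W K where "\<epsilon> > 0" "conn_open W" "K \<in> F W"
      and near: "\<And>t. t \<in> {m..b} \<Longrightarrow> \<bar>t - s\<bar> < \<epsilon> \<Longrightarrow> \<gamma> t \<in> W \<and> h t = germ (\<gamma> t) K"
      using germ_transportE[OF h, of s] s by auto
    show ?thesis
    proof (rule locally_section_germsI[of "min \<epsilon> (s - m)" W K])
      fix t assume "t \<in> {a..b}" "\<bar>t - s\<bar> < min \<epsilon> (s - m)"
      then have "t \<in> {m..b}" "\<bar>t - s\<bar> < \<epsilon>" "\<not> t \<le> m" by auto
      then show "\<gamma> t \<in> W \<and> ?f t = germ (\<gamma> t) K" using near by simp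
    qed (use \<open>m < s\<close> \<open>\<epsilon> > 0\<close> \<open>conn_open W\<close> \<open>K \<in> F W\<close> in auto)
  next
    case 3
    have sub: "{a..m} \<subseteq> {a..b}" "{m..b} \<subseteq> {a..b}" "m \<in> {a..m}" "m \<in> {m..b}" using m by auto
    obtain \<epsilon> C K1 K2 where "\<epsilon> > 0" "conn_open C" "K1 \<in> F C" "K2 \<in> F C"
      and near1: "\<And>t. t \<in> {a..m} \<Longrightarrow> \<bar>t - m\<bar> < \<epsilon> \<Longrightarrow> \<gamma> t \<in> C \<and> g t = germ (\<gamma> t) K1"
      and near2: "\<And>t. t \<in> {m..b} \<Longrightarrow> \<bar>t - m\<bar> < \<epsilon> \<Longrightarrow> \<gamma> t \<in> C \<and> h t = germ (\<gamma> t) K2"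
      using germ_transports_common_domain[OF cont sub(1,2) g h sub(3,4)] by blast
    have "\<gamma> m \<in> C" "germ (\<gamma> m) K1 = germ (\<gamma> m) K2"
      using near1[of m] near2[of m] m \<open>\<epsilon> > 0\<close> \<open>g m = h m\<close> by auto
    then have "\<forall>x\<in>C. K1 x = K2 x"
      using germ_eq_iff_eq_on[OF \<open>conn_open C\<close> \<open>\<gamma> m \<in> C\<close> \<open>K1 \<in> F C\<close> \<open>K2 \<in> F C\<close>] by simp
    show ?thesis
    proof (rule locally_section_germsI[of \<epsilon> C K1])
      fix t assume t: "t \<in> {a..b}" "\<bar>t - s\<bar> < \<epsilon>"
      show "\<gamma> t \<in> C \<and> ?f t = germ (\<gamma> t) K1"
      proof (cases "t \<le> m")
        case True
        then show ?thesis using near1[of t] t 3 by simp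
      next
        case False
        then have "\<gamma> t \<in> C" "h t = germ (\<gamma> t) K2" using near2[of t] t 3 by auto
        moreover have "germ (\<gamma> t) K1 = germ (\<gamma> t) K2"
          using germ_eqI_on[OF _ \<open>\<gamma> t \<in> C\<close>, of K1 K2] \<open>conn_open C\<close> \<open>\<forall>x\<in>C. K1 x = K2 x\<close>
          by (simp add: conn_open_def)
        ultimately show ?thesis using False by simp
      qed
    qed (use \<open>\<epsilon> > 0\<close> \<open>conn_open C\<close> \<open>K1 \<in> F C\<close> in auto)
  qed
qed

lemma germ_transport_unique:
  assumes cont: "continuous_on {a..b} \<gamma>"
    and g: "germ_transport F \<gamma> a b g" and h: "germ_transport F \<gamma> a b h"
    and "s \<in> {a..b}" "g s = h s" and "t \<in> {a..b}"
  shows "g t = h t"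
proof (rule Icc_connected_induction[where P = "\<lambda>t. g t = h t", OF assms(4,6,5)])
  fix u assume u: "u \<in> {a..b}"
  obtain \<epsilon> C K1 K2 where "\<epsilon> > 0" "conn_open C" "K1 \<in> F C" "K2 \<in> F C"
    and near1: "\<And>t. t \<in> {a..b} \<Longrightarrow> \<bar>t - u\<bar> < \<epsilon> \<Longrightarrow> \<gamma> t \<in> C \<and> g t = germ (\<gamma> t) K1"
    and near2: "\<And>t. t \<in> {a..b} \<Longrightarrow> \<bar>t - u\<bar> < \<epsilon> \<Longrightarrow> \<gamma> t \<in> C \<and> h t = germ (\<gamma> t) K2"
    using germ_transports_common_domain[OF cont order_refl order_refl g h u u] by blast
  \<comment> \<open>Near u, agreement at one time means agreement of the representing sections on all of C.\<close>
  have "g x = h x \<longleftrightarrow> (\<forall>y\<in>C. K1 y = K2 y)" if "x \<in> {a..b}" "\<bar>x - u\<bar> < \<epsilon>" for x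
    using near1[OF that] near2[OF that]
      germ_eq_iff_eq_on[OF \<open>conn_open C\<close> _ \<open>K1 \<in> F C\<close> \<open>K2 \<in> F C\<close>] by simp
  then show "\<exists>e>0. \<forall>x\<in>{a..b}. \<forall>y\<in>{a..b}. \<bar>x - u\<bar> < e \<longrightarrow> \<bar>y - u\<bar> < e \<longrightarrow> g x = h x \<longrightarrow> g y = h y"
    using \<open>\<epsilon> > 0\<close> by blast
qed

lemma germ_transport_extend:
  assumes "continuous_on {a..y} \<gamma>" "a \<le> x" "x \<le> y"
    and g: "germ_transport F \<gamma> a x g" and C: "conn_open C" "K \<in> F C" "\<And>t. t \<in> {x..y} \<Longrightarrow> \<gamma> t \<in> C"
    and "g x = germ (\<gamma> x) K"
  shows "germ_transport F \<gamma> a y (\<lambda>t. if t \<le> x then g t else germ (\<gamma> t) K)"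
  using germ_transport_glue[OF assms(1-3) g
      germ_transport_section[where F = F and C = C and c = x and d = y and \<gamma> = \<gamma>, OF C]] assms(8)
  by simp

end

context admissible_vf_sheaf
begin

lemma germ_transport_extends_near:
  assumes cont: "continuous_on {a..b} \<gamma>" and s: "s \<in> {a..b}"
    and dim: "\<And>t. t \<in> {a..b} \<Longrightarrow> germ_dim F (\<gamma> t) = germ_dim F (\<gamma> s)"
  shows "\<exists>\<delta>>0. \<forall>x\<in>{a..b}. \<forall>y\<in>{a..b}. \<bar>x - s\<bar> < \<delta> \<longrightarrow> \<bar>y - s\<bar> < \<delta> \<longrightarrow>
     (\<exists>g. germ_transport F \<gamma> a x g \<and> g a = g0) \<longrightarrow> (\<exists>g. germ_transport F \<gamma> a y g \<and> g a = g0)"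
proof -
  obtain C where C: "conn_open C" "\<gamma> s \<in> C"
    and extend: "\<forall>q\<in>C. germ_dim F q = germ_dim F (\<gamma> s) \<longrightarrow> (\<forall>g\<in>germs F q. \<exists>K\<in>F C. g = germ q K)"
    using germs_of_equal_dim_extend_to_nbhd[of "\<gamma> s"] by blast
  have "open C" using C(1) by (simp add: conn_open_def)
  then obtain \<delta> where "\<delta> > 0" and in_C: "\<And>t. t \<in> {a..b} \<Longrightarrow> \<bar>t - s\<bar> < \<delta> \<Longrightarrow> \<gamma> t \<in> C"
    using continuous_on_real_nbhd[OF cont s _ C(2)] by blast
  have "\<exists>g'. germ_transport F \<gamma> a y g' \<and> g' a = g0"
    if x: "x \<in> {a..b}" "\<bar>x - s\<bar> < \<delta>" and y: "y \<in> {a..b}" "\<bar>y - s\<bar> < \<delta>"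
      and g: "germ_transport F \<gamma> a x g" "g a = g0" for x y g
  proof (cases "y \<le> x")
    case True
    then show ?thesis using germ_transport_subinterval[OF g(1) order_refl True] g(2) by blast
  next
    case False
    have "g x \<in> germs F (\<gamma> x)" using germ_transport_in_germs[OF g(1), of x] x(1) by simp
    then have "\<exists>K\<in>F C. g x = germ (\<gamma> x) K" using extend in_C[OF x] dim[OF x(1)] by simp
    then obtain K where K: "K \<in> F C" "g x = germ (\<gamma> x) K" by blast
    have "germ_transport F \<gamma> a y (\<lambda>t. if t \<le> x then g t else germ (\<gamma> t) K)"
    proof (rule germ_transport_extend[OF _ _ _ g(1) C(1) K(1) _ K(2)])
      show "continuous_on {a..y} \<gamma>" by (rule continuous_on_subset[OF cont]) (use y in auto)
      show "a \<le> x" "x \<le> y" using x False by auto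
      show "\<gamma> t \<in> C" if "t \<in> {x..y}" for t using in_C that x y by auto
    qed
    then show ?thesis using x g(2) by auto
  qed
  then show ?thesis using \<open>\<delta> > 0\<close> by blast
qed

lemma germ_transport_exists:
  assumes ab: "a \<le> b" and cont: "continuous_on {a..b} \<gamma>"
    and dim: "\<And>t. t \<in> {a..b} \<Longrightarrow> germ_dim F (\<gamma> t) = germ_dim F (\<gamma> a)"
    and g0: "g0 \<in> germs F (\<gamma> a)"
  obtains g where "germ_transport F \<gamma> a b g" "g a = g0"
proof -
  define P where "P t \<longleftrightarrow> (\<exists>g. germ_transport F \<gamma> a t g \<and> g a = g0)" for t
  have "P a"
  proof -
    obtain K0 U0 where U0: "conn_open U0" "\<gamma> a \<in> U0" and K0: "K0 \<in> F U0" "g0 = germ (\<gamma> a) K0"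
      using g0 unfolding germs_def by blast
    have "germ_transport F \<gamma> a a (\<lambda>t. germ (\<gamma> t) K0)"
      by (rule germ_transport_section[where F = F and C = U0 and K = K0]) (use U0 K0 in auto)
    then show ?thesis unfolding P_def using K0(2) by auto
  qed
  have "P b"
  proof (rule Icc_connected_induction[where P = P, OF _ _ \<open>P a\<close>])
    show "a \<in> {a..b}" "b \<in> {a..b}" using ab by auto
    fix s assume s: "s \<in> {a..b}"
    have dim_s: "germ_dim F (\<gamma> t) = germ_dim F (\<gamma> s)" if "t \<in> {a..b}" for t
      using dim[OF that] dim[OF s] by simp
    show "\<exists>e>0. \<forall>x\<in>{a..b}. \<forall>y\<in>{a..b}. \<bar>x - s\<bar> < e \<longrightarrow> \<bar>y - s\<bar> < e \<longrightarrow> P x \<longrightarrow> P y"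
      unfolding P_def by (rule germ_transport_extends_near[OF cont s]) (rule dim_s)
  qed
  then show thesis using that unfolding P_def by blast
qed

end

theorem proposition3p7:
  fixes A :: "('a::topological_space, 'e::euclidean_space) chart set"
    and \<F> :: "'a set \<Rightarrow> ('a, 'e) vfield set"
    and \<gamma> :: "real \<Rightarrow> 'a" and a b :: real
  assumes "smooth_manifold A"
    and "vf_sheaf A \<F>"
    and "admissible \<F>"
    and "a \<le> b"
    and "continuous_on {a..b} \<gamma>"
    and "\<forall>t\<in>{a..b}. germ_dim \<F> (\<gamma> t) = germ_dim \<F> (\<gamma> a)"
  shows "\<forall>g0\<in>germs \<F> (\<gamma> a). \<exists>g. germ_transport \<F> \<gamma> a b g \<and> g a = g0 \<and>
           (\<forall>g'. germ_transport \<F> \<gamma> a b g' \<and> g' a = g0 \<longrightarrow> (\<forall>t\<in>{a..b}. g' t = g t))"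
proof
  fix g0 assume g0: "g0 \<in> germs \<F> (\<gamma> a)"
  interpret admissible_vf_sheaf A \<F>
    using assms(1-3) by unfold_locales (simp_all add: admissible_def)
  obtain g where g: "germ_transport \<F> \<gamma> a b g" "g a = g0"
    using germ_transport_exists[OF assms(4,5) _ g0] assms(6) by blast
  have "g' t = g t" if "germ_transport \<F> \<gamma> a b g'" "g' a = g0" "t \<in> {a..b}" for g' t
    using germ_transport_unique[OF assms(5) that(1) g(1) _ _ that(3), of a] that(2) g(2) assms(4) by simp
  then show "\<exists>g. germ_transport \<F> \<gamma> a b g \<and> g a = g0 \<and>
           (\<forall>g'. germ_transport \<F> \<gamma> a b g' \<and> g' a = g0 \<longrightarrow> (\<forall>t\<in>{a..b}. g' t = g t))"
    using g by blast
qed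

end
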